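(* Let $x\in\mathbb{R}^n$ and consider the linear model $\Phi(x;w)=\Phi(x;(A,b))=Ax+b$ with parameter $w=(A,b)$, $A\in\mathbb{R}^{m\times n}$, $b\in\mathbb{R}^m$, and the divergence $div(u,v)=\|u-v\|_2^2$. Let $K\ge1$, let $P_1,\dots,P_K$ be probability measures on $\mathbb{R}^n$ with finite second moments, $P_k$ supported on $\mathcal{D}_k$, and let $q_1,\dots,q_K\ge0$ with $\sum_kq_k=1$. Let $J(x)$ denote the Jacobian of $w\mapsto Ax+b$ (which depends only on $x$) and set $H_k=\int_{\mathcal{D}_k}J(x)^\top(2I_m)J(x)\,P_k(dx)$. Suppose the datasets are homogeneous, i.e. $H_1=\dots=H_K$. Then for any local parameters $w_k=(A_k,b_k)$, $k=1,\dots,K$, the weighted average $\hat w=\sum_{k=1}^Kq_kw_k$ is a minimizer of $$w\mapsto\sum_{k=1}^K q_k\int_{\mathcal{D}_k}div(\Phi(x;w_k),\Phi(x;w))\,P_k(dx).$$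
   Context: Here $w_k$ are the parameters of local models trained on client datasets $\mathcal{D}_k$ with distributions $P_k$, and the minimized objective is the distillation objective whose minimizer is the global model. "Homogeneous" means the matrices $H_k$ (the Hessians of the objective's $k$-th term, $\int J^\top \partial_u^2 div\, J\,dP_k$) coincide for all clients. *)

theory Defs
  imports "HOL-Probability.Probability"
begin

text \<open>Parameters w = (A,b) with A an m x n matrix and b in R^m are flattened into
  a single real vector indexed by the finite type ('m x 'n) + 'm.\<close>

definition param_A :: "real^(('m::finite \<times> 'n::finite) + 'm) \<Rightarrow> real^'n^'m" where
  "param_A w = (\<chi> i j. w $ Inl (i, j))"

definition param_b :: "real^(('m::finite \<times> 'n::finite) + 'm) \<Rightarrow> real^'m" where
  "param_b w = (\<chi> i. w $ Inr i)"

definition param :: "real^'n^'m \<Rightarrow> real^'m \<Rightarrow> real^(('m::finite \<times> 'n::finite) + 'm)" where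
  "param A b = (\<chi> p. case p of Inl (i, j) \<Rightarrow> A $ i $ j | Inr i \<Rightarrow> b $ i)"

definition Phi :: "real^'n \<Rightarrow> real^(('m::finite \<times> 'n::finite) + 'm) \<Rightarrow> real^'m" where
  "Phi x w = param_A w *v x + param_b w"

definition dvg :: "real^'m::finite \<Rightarrow> real^'m \<Rightarrow> real" where
  "dvg u v = (norm (u - v))\<^sup>2"

definition Jac :: "real^'n \<Rightarrow> real^(('m::finite \<times> 'n::finite) + 'm)^'m" where
  "Jac x = matrix (\<lambda>w. Phi x w)"

definition Hmat :: "(real^'n) measure \<Rightarrow> (real^'n) set
     \<Rightarrow> real^(('m::finite \<times> 'n::finite) + 'm)^(('m \<times> 'n) + 'm)" where
  "Hmat Pk Dk = (LINT x:Dk|Pk. transpose (Jac x) ** ((2::real) *\<^sub>R mat 1) ** Jac x)"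

definition objective :: "nat \<Rightarrow> (nat \<Rightarrow> real) \<Rightarrow> (nat \<Rightarrow> (real^'n) measure) \<Rightarrow> (nat \<Rightarrow> (real^'n) set)
     \<Rightarrow> (nat \<Rightarrow> real^(('m::finite \<times> 'n::finite) + 'm)) \<Rightarrow> real^(('m \<times> 'n) + 'm) \<Rightarrow> real" where
  "objective K q P D W w = (\<Sum>k\<in>{1..K}. q k * (LINT x:D k|P k. dvg (Phi x (W k)) (Phi x w)))"

end

theory Submission
  imports Defs
begin

(* Since Phi x is linear in the parameter, the k-th term of the objective equals
   (w_k - w)^T H_k (w_k - w) / 2.  Under homogeneity all H_k equal one positive semidefinite H,
   and for weights summing to 1 the weighted sum of (w_k - w)^T H (w_k - w) is its value at the
   weighted mean w' plus (w' - w)^T H (w' - w) >= 0, because the cross terms vanish. *)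

(* The parameter entry p affects only the output row param_row p, with coefficient
   Phi_coeff x p. *)

definition param_row :: "('m::finite \<times> 'n::finite) + 'm \<Rightarrow> 'm" where
  "param_row p = (case p of Inl (i, _) \<Rightarrow> i | Inr i \<Rightarrow> i)"

definition Phi_coeff :: "real^'n \<Rightarrow> ('m::finite \<times> 'n::finite) + 'm \<Rightarrow> real" where
  "Phi_coeff x p = (case p of Inl (_, j) \<Rightarrow> x $ j | Inr _ \<Rightarrow> 1)"

lemma Jac_nth:
  "(Jac x :: real^(('m::finite \<times> 'n::finite) + 'm)^'m) $ i $ p
     = (if param_row p = i then Phi_coeff x p else 0)"
  by (cases p) (auto simp: Jac_def matrix_def Phi_def param_A_def param_b_def param_row_def
      Phi_coeff_def axis_def matrix_vector_mult_def if_distrib[of "\<lambda>c. c * _"] cong: if_cong)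

lemma linear_Phi: "linear (Phi x)"
  by (rule linearI) (simp_all add: Phi_def param_A_def param_b_def vec_eq_iff
      matrix_vector_mult_def algebra_simps sum.distrib sum_distrib_left)

lemma Jac_mult_vec: "Jac x *v w = Phi x w"
  by (simp add: Jac_def matrix_works linear_Phi)

lemma gram_matrix_nth:
  fixes J :: "real^'a::finite^'b::finite"
  shows "(transpose J ** (c *\<^sub>R mat 1) ** J) $ p $ q = c * (\<Sum>i\<in>UNIV. J $ i $ p * J $ i $ q)"
  by (simp add: matrix_matrix_mult_def transpose_def mat_def sum_distrib_left if_distrib mult_ac
      cong: if_cong)

lemma inner_gram_matrix:
  fixes J :: "real^'a::finite^'b::finite"
  shows "d \<bullet> ((transpose J ** (c *\<^sub>R mat 1) ** J) *v d) = c * (norm (J *v d))\<^sup>2"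
proof -
  have "(transpose J ** (c *\<^sub>R mat 1) ** J) *v d = c *\<^sub>R (transpose J *v (J *v d))"
    by (simp flip: matrix_vector_mul_assoc scaleR_matrix_vector_assoc add: matrix_vector_mult_scaleR)
  moreover have "d \<bullet> (transpose J *v (J *v d)) = (J *v d) \<bullet> (J *v d)"
    by (metis dot_lmul_matrix vector_transpose_matrix)
  ultimately show ?thesis
    by (simp add: power2_norm_eq_inner)
qed

lemma Jac_gram_nth:
  "(transpose (Jac x) ** ((2::real) *\<^sub>R mat 1) ** Jac x
      :: real^(('m::finite \<times> 'n::finite) + 'm)^(('m \<times> 'n) + 'm)) $ p $ q
     = (if param_row p = param_row q then 2 * Phi_coeff x p * Phi_coeff x q else 0)"
  by (simp add: gram_matrix_nth Jac_nth if_distrib[of "\<lambda>c. c * _"] if_distrib[of "\<lambda>c. _ * c"]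
      cong: if_cong)

lemma integrable_euclidean_componentwise:
  fixes f :: "'a \<Rightarrow> 'b::euclidean_space"
  assumes "\<And>b. b \<in> Basis \<Longrightarrow> integrable M (\<lambda>x. f x \<bullet> b)"
  shows "integrable M f"
proof -
  have "integrable M (\<lambda>x. \<Sum>b\<in>Basis. (f x \<bullet> b) *\<^sub>R b)"
    using assms by auto
  then show ?thesis
    by (simp add: euclidean_representation)
qed

lemma integrable_matrix_entrywise:
  fixes f :: "'a \<Rightarrow> real^'c::finite^'r::finite"
  assumes "\<And>i j. integrable M (\<lambda>x. f x $ i $ j)"
  shows "integrable M f"
  by (rule integrable_euclidean_componentwise)
     (auto simp: Basis_vec_def inner_axis cart_eq_inner_axis[symmetric] assms)

lemma abs_Phi_coeff_le: "\<bar>Phi_coeff x p\<bar> \<le> 1 + norm x"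
  by (cases p) (auto simp: Phi_coeff_def intro: add_increasing component_le_norm_cart)

lemma borel_measurable_Phi_coeff: "(\<lambda>x. Phi_coeff x p) \<in> borel_measurable borel"
  by (cases p) (auto simp: Phi_coeff_def intro!: borel_measurable_continuous_onI continuous_on_component)

lemma integrable_Phi_coeff_mult:
  fixes P :: "(real^'n::finite) measure"
  assumes "finite_measure P" "sets P = sets borel" "integrable P (\<lambda>x. (norm x)\<^sup>2)"
  shows "integrable P (\<lambda>x. Phi_coeff x p * Phi_coeff x q)"
proof (rule Bochner_Integration.integrable_bound)
  interpret finite_measure P by fact
  show "integrable P (\<lambda>x. 2 + 2 * (norm x)\<^sup>2)"
    using assms(3) by auto
  show "(\<lambda>x. Phi_coeff x p * Phi_coeff x q) \<in> borel_measurable P"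
    unfolding measurable_cong_sets[OF assms(2) refl]
    by (intro borel_measurable_times borel_measurable_Phi_coeff)
  have "\<bar>Phi_coeff x p * Phi_coeff x q\<bar> \<le> 2 + 2 * (norm x)\<^sup>2" for x
  proof -
    have "\<bar>Phi_coeff x p * Phi_coeff x q\<bar> \<le> (1 + norm x) * (1 + norm x)"
      unfolding abs_mult by (intro mult_mono abs_Phi_coeff_le) auto
    also have "\<dots> \<le> 2 + 2 * (norm x)\<^sup>2"
      using sum_squares_ge_zero[of "1 - norm x" 0] by (simp add: power2_eq_square algebra_simps)
    finally show ?thesis .
  qed
  then show "AE x in P. norm (Phi_coeff x p * Phi_coeff x q) \<le> norm (2 + 2 * (norm x)\<^sup>2)"
    by simp
qed

lemma set_integrable_Jac_gram:
  fixes P :: "(real^'n::finite) measure"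
  assumes "finite_measure P" "sets P = sets borel" "integrable P (\<lambda>x. (norm x)\<^sup>2)"
    and "D \<in> sets borel"
  shows "set_integrable P D (\<lambda>x. transpose (Jac x) ** ((2::real) *\<^sub>R mat 1) ** Jac x
           :: real^(('m::finite \<times> 'n) + 'm)^(('m \<times> 'n) + 'm))"
  unfolding set_integrable_def
proof (rule integrable_mult_indicator)
  show "D \<in> sets P"
    using assms(2,4) by simp
  show "integrable P (\<lambda>x. transpose (Jac x) ** ((2::real) *\<^sub>R mat 1) ** Jac x
           :: real^(('m::finite \<times> 'n) + 'm)^(('m \<times> 'n) + 'm))"
  proof (rule integrable_matrix_entrywise)
    fix p q :: "('m \<times> 'n) + 'm"
    show "integrable P (\<lambda>x. (transpose (Jac x) ** ((2::real) *\<^sub>R mat 1) ** Jac x) $ p $ q)"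
      using integrable_Phi_coeff_mult[OF assms(1-3)]
      by (cases "param_row p = param_row q") (simp_all add: Jac_gram_nth mult.assoc)
  qed
qed

lemma inner_set_integral_matrix:
  fixes f :: "'a \<Rightarrow> real^'c::finite^'c"
  assumes "set_integrable M A f"
  shows "d \<bullet> ((LINT x:A|M. f x) *v d) = (LINT x:A|M. d \<bullet> (f x *v d))"
proof -
  define T where "T F = d \<bullet> (F *v d)" for F :: "real^'c^'c"
  have "bounded_linear T"
    unfolding T_def
    by (intro linear_conv_bounded_linear[THEN iffD1] linearI)
       (simp_all add: matrix_vector_mult_add_rdistrib inner_add_right
         flip: scaleR_matrix_vector_assoc)
  then have "T (LINT x|M. indicator A x *\<^sub>R f x) = (LINT x|M. T (indicator A x *\<^sub>R f x))"
    using assms unfolding set_integrable_def by (rule integral_bounded_linear[symmetric])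
  then show ?thesis
    by (simp add: T_def set_lebesgue_integral_def flip: scaleR_matrix_vector_assoc)
qed

lemma inner_Hmat:
  fixes P :: "(real^'n::finite) measure"
  assumes "finite_measure P" "sets P = sets borel" "integrable P (\<lambda>x. (norm x)\<^sup>2)"
    and "D \<in> sets borel"
  shows "d \<bullet> ((Hmat P D :: real^(('m::finite \<times> 'n) + 'm)^(('m \<times> 'n) + 'm)) *v d)
           = 2 * (LINT x:D|P. (norm (Phi x d))\<^sup>2)"
  unfolding Hmat_def
  by (simp add: inner_set_integral_matrix[OF set_integrable_Jac_gram[OF assms]]
      inner_gram_matrix Jac_mult_vec)

lemma inner_Hmat_nonneg:
  fixes P :: "(real^'n::finite) measure"
  assumes "finite_measure P" "sets P = sets borel" "integrable P (\<lambda>x. (norm x)\<^sup>2)"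
    and "D \<in> sets borel"
  shows "0 \<le> d \<bullet> ((Hmat P D :: real^(('m::finite \<times> 'n) + 'm)^(('m \<times> 'n) + 'm)) *v d)"
  by (simp add: inner_Hmat[OF assms] set_lebesgue_integral_def)

lemma objective_eq_quadratic_form:
  fixes P :: "nat \<Rightarrow> (real^'n::finite) measure"
    and H :: "real^(('m::finite \<times> 'n) + 'm)^(('m \<times> 'n) + 'm)"
  assumes "\<And>k. k \<in> {1..K} \<Longrightarrow> finite_measure (P k)"
    and "\<And>k. k \<in> {1..K} \<Longrightarrow> sets (P k) = sets borel"
    and "\<And>k. k \<in> {1..K} \<Longrightarrow> integrable (P k) (\<lambda>x. (norm x)\<^sup>2)"
    and "\<And>k. k \<in> {1..K} \<Longrightarrow> D k \<in> sets borel"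
    and "\<And>k. k \<in> {1..K} \<Longrightarrow> Hmat (P k) (D k) = H"
  shows "objective K q P D W w = (\<Sum>k\<in>{1..K}. q k * ((W k - w) \<bullet> (H *v (W k - w)))) / 2"
proof -
  have "(LINT x:D k|P k. dvg (Phi x (W k)) (Phi x w)) = (W k - w) \<bullet> (H *v (W k - w)) / 2"
    if "k \<in> {1..K}" for k
    using inner_Hmat[of "P k" "D k" "W k - w"] assms that
    by (simp add: dvg_def linear_diff[OF linear_Phi])
  then show ?thesis
    unfolding objective_def sum_divide_distrib by (intro sum.cong) auto
qed

lemma bilinear_matrix_form: "bilinear (\<lambda>u v. u \<bullet> (A *v v))"
  for A :: "real^'c::finite^'r::finite"
  unfolding bilinear_def
  by (auto intro!: linearI simp: matrix_vector_right_distrib matrix_vector_mult_scaleR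
      matrix_vector_mult_add_rdistrib inner_add_left inner_add_right)

lemma sum_bilinear_recenter:
  fixes B :: "'a::real_vector \<Rightarrow> 'a \<Rightarrow> real" and W :: "'i \<Rightarrow> 'a"
  assumes B: "bilinear B" and q: "sum q S = 1"
  defines "m \<equiv> \<Sum>k\<in>S. q k *\<^sub>R W k"
  shows "(\<Sum>k\<in>S. q k * B (W k - w) (W k - w))
           = (\<Sum>k\<in>S. q k * B (W k - m) (W k - m)) + B (m - w) (m - w)"
proof -
  have centered: "(\<Sum>k\<in>S. q k *\<^sub>R (W k - m)) = 0"
    by (simp add: scaleR_diff_right sum_subtractf m_def q flip: scaleR_sum_left)
  have cross_left: "(\<Sum>k\<in>S. q k * B (W k - m) v) = 0" for v
    using linear_sum[of "\<lambda>u. B u v" "\<lambda>k. q k *\<^sub>R (W k - m)" S] B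
    by (simp add: centered bilinear_lzero bilinear_lmul bilinear_def)
  have cross_right: "(\<Sum>k\<in>S. q k * B v (W k - m)) = 0" for v
    using linear_sum[of "\<lambda>u. B v u" "\<lambda>k. q k *\<^sub>R (W k - m)" S] B
    by (simp add: centered bilinear_rzero bilinear_rmul bilinear_def)
  have split: "W k - w = (W k - m) + (m - w)" for k
    by simp
  have "B (W k - w) (W k - w) = B (W k - m) (W k - m) + B (W k - m) (m - w)
          + B (m - w) (W k - m) + B (m - w) (m - w)" for k
    by (simp only: split bilinear_ladd[OF B] bilinear_radd[OF B] add.assoc)
  then show ?thesis
    by (simp add: distrib_left sum.distrib cross_left cross_right q flip: sum_distrib_right)
qed

lemma weighted_mean_minimizes_sum_bilinear:
  fixes B :: "'a::real_vector \<Rightarrow> 'a \<Rightarrow> real" and W :: "'i \<Rightarrow> 'a"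
  assumes "bilinear B" "\<And>v. 0 \<le> B v v" "sum q S = 1"
  defines "m \<equiv> \<Sum>k\<in>S. q k *\<^sub>R W k"
  shows "(\<Sum>k\<in>S. q k * B (W k - m) (W k - m)) \<le> (\<Sum>k\<in>S. q k * B (W k - w) (W k - w))"
  using sum_bilinear_recenter[OF assms(1,3), of W w] assms(2)[of "m - w"] unfolding m_def by simp

theorem corollary1:
  fixes K :: nat
    and q :: "nat \<Rightarrow> real"
    and P :: "nat \<Rightarrow> (real^'n::finite) measure"
    and D :: "nat \<Rightarrow> (real^'n) set"
    and W :: "nat \<Rightarrow> real^(('m::finite \<times> 'n) + 'm)"
  assumes "K \<ge> 1"
    and "\<And>k. k \<in> {1..K} \<Longrightarrow> prob_space (P k)"
    and "\<And>k. k \<in> {1..K} \<Longrightarrow> sets (P k) = sets borel"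
    and "\<And>k. k \<in> {1..K} \<Longrightarrow> integrable (P k) (\<lambda>x. (norm x)\<^sup>2)"
    and "\<And>k. k \<in> {1..K} \<Longrightarrow> D k \<in> sets borel"
    and "\<And>k. k \<in> {1..K} \<Longrightarrow> measure (P k) (D k) = 1"
    and "\<And>k. k \<in> {1..K} \<Longrightarrow> q k \<ge> 0"
    and "(\<Sum>k\<in>{1..K}. q k) = 1"
    and "\<And>k l. k \<in> {1..K} \<Longrightarrow> l \<in> {1..K} \<Longrightarrow>
           (Hmat (P k) (D k) :: real^(('m \<times> 'n) + 'm)^(('m \<times> 'n) + 'm)) = Hmat (P l) (D l)"
  shows "\<forall>w. objective K q P D W (\<Sum>k\<in>{1..K}. q k *\<^sub>R W k) \<le> objective K q P D W w"
proof
  fix w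
  have one: "1 \<in> {1..K}"
    using assms(1) by simp
  define H where "H = (Hmat (P 1) (D 1) :: real^(('m \<times> 'n) + 'm)^(('m \<times> 'n) + 'm))"
  have finite: "finite_measure (P k)" if "k \<in> {1..K}" for k
    using assms(2)[OF that] by (simp add: prob_space_def)
  have psd: "0 \<le> v \<bullet> (H *v v)" for v
    unfolding H_def using one assms(3-5) by (intro inner_Hmat_nonneg finite)
  have objective_eq:
    "objective K q P D W v = (\<Sum>k\<in>{1..K}. q k * ((W k - v) \<bullet> (H *v (W k - v)))) / 2" for v
    using finite assms(3-5) assms(9)[OF _ one] unfolding H_def
    by (intro objective_eq_quadratic_form)
  show "objective K q P D W (\<Sum>k\<in>{1..K}. q k *\<^sub>R W k) \<le> objective K q P D W w"
    unfolding objective_eq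
    using weighted_mean_minimizes_sum_bilinear[OF bilinear_matrix_form psd assms(8)]
    by (intro divide_right_mono) simp_all
qed

end
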